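(* Let $S$ be a set of $n\ge3$ points in the plane with the $L_1$-metric as underlying metric. The minimum, over all axis-aligned highway crosses of infinite speed, of the travel-time diameter of $S$ equals the width of a smallest enclosing cross of $S$.
   Context: An axis-aligned highway cross is the union $H$ of a horizontal line and a vertical line. One travels with speed $1$ off $H$ (distances in the $L_1$-metric $d$) and with infinite speed along $H$; hence the travel time is $t_H(p,q)=\min\{d(p,q),\, d(p,H)+d(q,H)\}$, where $d(x,H)$ is the $L_1$-distance from $x$ to $H$. The travel-time diameter of $S$ is $\max_{p,q\in S}t_H(p,q)$. An enclosing cross of $S$ is the union of a horizontal strip and a vertical strip of equal width $\omega$ (a strip being the closed region between two parallel lines, its width the distance between them) whose union contains $S$; $\omega$ is its width. A smallest enclosing cross is one of minimum width. *)

theory Defs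
  imports Complex_Main
begin

type_synonym pt = "real \<times> real"

definition l1 :: "pt \<Rightarrow> pt \<Rightarrow> real" where
  "l1 p q = \<bar>fst p - fst q\<bar> + \<bar>snd p - snd q\<bar>"

definition cross :: "real \<Rightarrow> real \<Rightarrow> pt set" where
  "cross a b = {p. fst p = a \<or> snd p = b}"

definition dist_set :: "pt \<Rightarrow> pt set \<Rightarrow> real" where
  "dist_set p H = (INF h\<in>H. l1 p h)"

definition travel_time :: "pt set \<Rightarrow> pt \<Rightarrow> pt \<Rightarrow> real" where
  "travel_time H p q = min (l1 p q) (dist_set p H + dist_set q H)"

definition travel_diam :: "pt set \<Rightarrow> pt set \<Rightarrow> real" where
  "travel_diam H S = Max {travel_time H p q | p q. p \<in> S \<and> q \<in> S}"

definition enclosing_cross :: "pt set \<Rightarrow> real \<Rightarrow> real \<Rightarrow> real \<Rightarrow> bool" where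
  "enclosing_cross S c e w \<longleftrightarrow> w \<ge> 0 \<and>
     S \<subseteq> {p. c \<le> snd p \<and> snd p \<le> c + w} \<union> {p. e \<le> fst p \<and> fst p \<le> e + w}"

end

theory Submission
  imports Defs "HOL-Analysis.Elementary_Metric_Spaces"
begin

text \<open>
  Split the points of \<open>S\<close> according to which line of a highway cross \<open>cross a b\<close> is nearer.
  For two points nearer the vertical line, both the direct route and the route via the highway
  are at least the difference of their \<open>x\<close>-coordinates; hence these \<open>x\<close>-coordinates spread by at
  most the travel-time diameter, and likewise for the \<open>y\<close>-coordinates of the other points.
  So every cross yields an enclosing cross whose width is at most its travel-time diameter.
  Conversely, placing the highways on the centre lines of an enclosing cross of width \<open>\<omega>\<close> brings
  every point within \<open>\<omega>/2\<close> of the highway, so the travel-time diameter is at most \<open>\<omega>\<close>.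
  A smallest enclosing cross exists because its width only depends on which points the
  horizontal strip covers, and there are finitely many choices.
\<close>

lemma dist_set_cross: "dist_set p (cross a b) = min \<bar>fst p - a\<bar> \<bar>snd p - b\<bar>"
proof -
  have "min \<bar>fst p - a\<bar> \<bar>snd p - b\<bar> \<in> l1 p ` cross a b"
  proof (cases "\<bar>fst p - a\<bar> \<le> \<bar>snd p - b\<bar>")
    case True
    then show ?thesis
      by (intro image_eqI[where x="(a, snd p)"]) (auto simp: l1_def cross_def)
  next
    case False
    then show ?thesis
      by (intro image_eqI[where x="(fst p, b)"]) (auto simp: l1_def cross_def)
  qed
  moreover have "\<And>x. x \<in> l1 p ` cross a b \<Longrightarrow> min \<bar>fst p - a\<bar> \<bar>snd p - b\<bar> \<le> x"
    by (auto simp: l1_def cross_def)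
  ultimately show ?thesis
    unfolding dist_set_def by (rule cInf_eq_minimum)
qed

lemma travel_time_cross_nonneg: "0 \<le> travel_time (cross a b) p q"
  by (simp add: travel_time_def dist_set_cross l1_def)

lemma abs_fst_diff_le_travel_time:
  assumes "\<bar>fst p - a\<bar> \<le> \<bar>snd p - b\<bar>" and "\<bar>fst q - a\<bar> \<le> \<bar>snd q - b\<bar>"
  shows "\<bar>fst p - fst q\<bar> \<le> travel_time (cross a b) p q"
  using assms by (simp add: travel_time_def dist_set_cross l1_def)

lemma abs_snd_diff_le_travel_time:
  assumes "\<bar>snd p - b\<bar> \<le> \<bar>fst p - a\<bar>" and "\<bar>snd q - b\<bar> \<le> \<bar>fst q - a\<bar>"
  shows "\<bar>snd p - snd q\<bar> \<le> travel_time (cross a b) p q"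
  using assms by (simp add: travel_time_def dist_set_cross l1_def)

lemma travel_diam_eq_Max_image:
  "travel_diam H S = Max ((\<lambda>(p, q). travel_time H p q) ` (S \<times> S))"
  unfolding travel_diam_def by (rule arg_cong[where f=Max]) auto

lemma travel_time_le_travel_diam:
  assumes "finite S" and "p \<in> S" and "q \<in> S"
  shows "travel_time H p q \<le> travel_diam H S"
  unfolding travel_diam_eq_Max_image using assms by (intro Max_ge) force+

lemma travel_diam_le:
  assumes "finite S" and "S \<noteq> {}"
    and "\<And>p q. p \<in> S \<Longrightarrow> q \<in> S \<Longrightarrow> travel_time H p q \<le> D"
  shows "travel_diam H S \<le> D"
  unfolding travel_diam_eq_Max_image using assms by (intro Max.boundedI) auto

lemma travel_diam_cross_nonneg:
  assumes "finite S" and "S \<noteq> {}"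
  shows "0 \<le> travel_diam (cross a b) S"
proof -
  obtain p where "p \<in> S"
    using assms(2) by blast
  then show ?thesis
    using travel_time_cross_nonneg travel_time_le_travel_diam[OF assms(1)] order_trans by blast
qed

lemma finite_subset_interval_diameter:
  fixes A :: "real set"
  assumes "finite A"
  shows "\<exists>l. A \<subseteq> {l..l + diameter A}"
proof (cases "A = {}")
  case False
  have "x \<le> Min A + diameter A" if "x \<in> A" for x
    using diameter_bounded_bound[OF finite_imp_bounded[OF assms] that, of "Min A"]
      Min_in[OF assms False] by (simp add: dist_real_def)
  then have "A \<subseteq> {Min A..Min A + diameter A}"
    using assms by auto
  then show ?thesis ..
qed simp

text \<open>The width of the narrowest enclosing cross whose horizontal strip covers \<open>A\<close> and whose
  vertical strip covers the rest of \<open>S\<close>.\<close>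
definition split_width :: "pt set \<Rightarrow> pt set \<Rightarrow> real" where
  "split_width S A = max (diameter (snd ` A)) (diameter (fst ` (S - A)))"

lemma enclosing_cross_split_width:
  assumes "finite S" and "A \<subseteq> S"
  shows "\<exists>c e. enclosing_cross S c e (split_width S A)"
proof -
  have fin: "finite (snd ` A)" "finite (fst ` (S - A))"
    using assms finite_subset by auto
  obtain c where c: "snd ` A \<subseteq> {c..c + diameter (snd ` A)}"
    using finite_subset_interval_diameter[OF fin(1)] by blast
  obtain e where e: "fst ` (S - A) \<subseteq> {e..e + diameter (fst ` (S - A))}"
    using finite_subset_interval_diameter[OF fin(2)] by blast
  have "0 \<le> split_width S A"
    using diameter_ge_0[OF finite_imp_bounded[OF fin(1)]] by (simp add: split_width_def)
  moreover have "S \<subseteq> {p. c \<le> snd p \<and> snd p \<le> c + split_width S A}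
      \<union> {p. e \<le> fst p \<and> fst p \<le> e + split_width S A}"
    using c e by (force simp: split_width_def)
  ultimately show ?thesis
    unfolding enclosing_cross_def by blast
qed

lemma split_width_le_enclosing_cross:
  assumes "enclosing_cross S c e w"
  shows "split_width S {p \<in> S. c \<le> snd p \<and> snd p \<le> c + w} \<le> w"
proof -
  let ?A = "{p \<in> S. c \<le> snd p \<and> snd p \<le> c + w}"
  have "0 \<le> w" and vertical: "\<And>p. p \<in> S - ?A \<Longrightarrow> e \<le> fst p \<and> fst p \<le> e + w"
    using assms unfolding enclosing_cross_def by auto
  have "diameter (snd ` ?A) \<le> w"
    using \<open>0 \<le> w\<close> by (intro diameter_le) auto
  moreover have "\<bar>fst p - fst q\<bar> \<le> w" if "p \<in> S - ?A" and "q \<in> S - ?A" for p q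
    using vertical[OF that(1)] vertical[OF that(2)] by linarith
  then have "diameter (fst ` (S - ?A)) \<le> w"
    using \<open>0 \<le> w\<close> by (intro diameter_le) (auto simp only: image_iff real_norm_def)
  ultimately show ?thesis
    unfolding split_width_def by simp
qed

lemma split_width_le_travel_diam:
  assumes "finite S" and "S \<noteq> {}"
  shows "split_width S {p \<in> S. \<bar>snd p - b\<bar> \<le> \<bar>fst p - a\<bar>} \<le> travel_diam (cross a b) S"
proof -
  let ?D = "travel_diam (cross a b) S"
  have diam: "travel_time (cross a b) p q \<le> ?D" if "p \<in> S" and "q \<in> S" for p q
    using travel_time_le_travel_diam[OF assms(1) that] .
  have "0 \<le> ?D"
    using travel_diam_cross_nonneg[OF assms] .
  moreover have "\<bar>snd p - snd q\<bar> \<le> ?D"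
    if "p \<in> S" "q \<in> S" "\<bar>snd p - b\<bar> \<le> \<bar>fst p - a\<bar>" "\<bar>snd q - b\<bar> \<le> \<bar>fst q - a\<bar>" for p q
    using abs_snd_diff_le_travel_time[OF that(3,4)] diam[OF that(1,2)] by linarith
  moreover have "\<bar>fst p - fst q\<bar> \<le> ?D"
    if "p \<in> S" "q \<in> S" "\<bar>fst p - a\<bar> \<le> \<bar>snd p - b\<bar>" "\<bar>fst q - a\<bar> \<le> \<bar>snd q - b\<bar>" for p q
    using abs_fst_diff_le_travel_time[OF that(3,4)] diam[OF that(1,2)] by linarith
  ultimately show ?thesis
    unfolding split_width_def by (force intro!: diameter_le)
qed

lemma travel_diam_centred_cross_le:
  assumes "finite S" and "S \<noteq> {}" and "enclosing_cross S c e w"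
  shows "travel_diam (cross (e + w/2) (c + w/2)) S \<le> w"
proof (rule travel_diam_le[OF assms(1,2)])
  have near: "dist_set p (cross (e + w/2) (c + w/2)) \<le> w/2" if "p \<in> S" for p
  proof -
    have "(c \<le> snd p \<and> snd p \<le> c + w) \<or> (e \<le> fst p \<and> fst p \<le> e + w)"
      using assms(3) that unfolding enclosing_cross_def by auto
    then have "\<bar>snd p - (c + w/2)\<bar> \<le> w/2 \<or> \<bar>fst p - (e + w/2)\<bar> \<le> w/2"
      by linarith
    then show ?thesis
      unfolding dist_set_cross by linarith
  qed
  fix p q
  assume "p \<in> S" and "q \<in> S"
  then show "travel_time (cross (e + w/2) (c + w/2)) p q \<le> w"
    using near[of p] near[of q] unfolding travel_time_def by linarith
qed

theorem lemma2:
  fixes S :: "pt set"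
  assumes "finite S" and "card S \<ge> 3"
  shows "\<exists>\<omega>. (\<exists>c e. enclosing_cross S c e \<omega> \<and>
                   (\<forall>c' e' \<omega>'. enclosing_cross S c' e' \<omega>' \<longrightarrow> \<omega> \<le> \<omega>'))
           \<and> (\<exists>a b. travel_diam (cross a b) S = \<omega>)
           \<and> (\<forall>a b. \<omega> \<le> travel_diam (cross a b) S)"
proof -
  have ne: "S \<noteq> {}"
    using assms(2) by auto
  define \<omega> where "\<omega> = Min (split_width S ` Pow S)"
  have fin: "finite (split_width S ` Pow S)"
    using assms(1) by simp
  have least: "\<omega> \<le> split_width S A" if "A \<subseteq> S" for A
    unfolding \<omega>_def using fin that by (intro Min_le) auto
  obtain A where "A \<subseteq> S" and "\<omega> = split_width S A"
    unfolding \<omega>_def using Min_in[OF fin] by auto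
  then obtain c e where ce: "enclosing_cross S c e \<omega>"
    using enclosing_cross_split_width[OF assms(1)] by metis
  have smallest: "\<omega> \<le> \<omega>'" if "enclosing_cross S c' e' \<omega>'" for c' e' \<omega>'
    using least[of "{p \<in> S. c' \<le> snd p \<and> snd p \<le> c' + \<omega>'}"]
      split_width_le_enclosing_cross[OF that] by auto
  have lower: "\<omega> \<le> travel_diam (cross a b) S" for a b
    using least[of "{p \<in> S. \<bar>snd p - b\<bar> \<le> \<bar>fst p - a\<bar>}"]
      split_width_le_travel_diam[OF assms(1) ne, of b a] by auto
  have "travel_diam (cross (e + \<omega>/2) (c + \<omega>/2)) S = \<omega>"
    using travel_diam_centred_cross_le[OF assms(1) ne ce] lower by (meson order_antisym)
  then show ?thesis
    using ce smallest lower by blast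
qed

end
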